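(* Let $q$ be an odd prime power, let $\omega$ be a non-square in $\mathbb F_q$ and $\epsilon\in\mathbb F_{q^2}$ with $\epsilon^2=\omega$, and write every $z\in\mathbb F_{q^2}$ as $z=z_1+\epsilon z_2$ with $z_1,z_2\in\mathbb F_q$. Let $\mathcal C: aX^2+bXY+cXZ+dYZ+eZ^2=0$ be a non-singular conic of $\mathrm{PG}(2,q^2)$ with $a,b,c,d,e\in\mathbb F_{q^2}$, $b\ne0$. Put $A=-a_2b_1+a_1b_2$, $B=b_2c_1-b_1c_2-a_2d_1+a_1d_2$, $C=-c_2d_1+c_1d_2+b_2e_1-b_1e_2$, $D=d_2e_1-d_1e_2$, and let $\mathcal S$ be the cubic surface of $\mathrm{PG}(3,q)$, in homogeneous coordinates $(t_1:t_2:X:Z)$, with equation $$2t_1t_2(b_1X+d_1Z)-(t_1^2+\omega t_2^2)(b_2X+d_2Z)+AX^3+BX^2Z+CXZ^2+DZ^3=0.$$ Then $\mathcal S$ is irreducible if and only if $b_1d_2-b_2d_1\neq0$.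
   Context: Irreducibility is understood over the algebraic closure of $\mathbb F_q$. *)

theory Defs
  imports "HOL-Algebra.Algebraic_Closure_Type"
begin

text \<open>Polynomials in the four variables t1, t2, X, Z over a commutative ring 'k,
  realised as iterated univariate polynomials
  'k[t1][t2][X][Z] = 'k poly poly poly poly.\<close>

type_synonym 'k mpoly4 = "'k poly poly poly poly"

definition mconst :: "'k::comm_ring_1 \<Rightarrow> 'k mpoly4" where
  "mconst c = [:[:[:[:c:]:]:]:]"

definition var_t1 :: "'k::comm_ring_1 mpoly4" where
  "var_t1 = [:[:[: [:0, 1:] :]:]:]"

definition var_t2 :: "'k::comm_ring_1 mpoly4" where
  "var_t2 = [:[: ([:0, 1:] :: 'k poly poly) :]:]"

definition var_X :: "'k::comm_ring_1 mpoly4" where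
  "var_X = [: ([:0, 1:] :: 'k poly poly poly) :]"

definition var_Z :: "'k::comm_ring_1 mpoly4" where
  "var_Z = ([:0, 1:] :: 'k mpoly4)"

text \<open>A conic a X^2 + b XY + c XZ + d YZ + e Z^2 over a field K is non-singular
  iff it has no singular point, i.e. no projective point (x:y:z) over K where the form
  and all its partial derivatives vanish. (We use K = algebraic closure.)\<close>

definition conic_nonsingular :: "'k::field \<Rightarrow> 'k \<Rightarrow> 'k \<Rightarrow> 'k \<Rightarrow> 'k \<Rightarrow> bool" where
  "conic_nonsingular a b c d e \<longleftrightarrow>
     \<not> (\<exists>x y z. (x, y, z) \<noteq> (0, 0, 0) \<and>
          a*x^2 + b*x*y + c*x*z + d*y*z + e*z^2 = 0 \<and>
          2*a*x + b*y + c*z = 0 \<and>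
          b*x + d*z = 0 \<and>
          c*x + d*y + 2*e*z = 0)"

text \<open>The cubic form of the surface S, with coefficients in F_q, viewed over an
  extension field via the embedding h (later: the algebraic closure).\<close>

definition surface_poly ::
  "('a::field \<Rightarrow> 'k::field) \<Rightarrow> 'a \<Rightarrow> 'a \<Rightarrow> 'a \<Rightarrow> 'a \<Rightarrow> 'a \<Rightarrow> 'a \<Rightarrow> 'a \<Rightarrow> 'a \<Rightarrow> 'a
     \<Rightarrow> 'a \<Rightarrow> 'a \<Rightarrow> 'k mpoly4" where
  "surface_poly h w a1 a2 b1 b2 c1 c2 d1 d2 e1 e2 =
     (let A = - a2*b1 + a1*b2;
          B = b2*c1 - b1*c2 - a2*d1 + a1*d2;
          C = - c2*d1 + c1*d2 + b2*e1 - b1*e2;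
          D = d2*e1 - d1*e2;
          k = (\<lambda>u. mconst (h u))
      in 2 * var_t1 * var_t2 * (k b1 * var_X + k d1 * var_Z)
         - (var_t1^2 + k w * var_t2^2) * (k b2 * var_X + k d2 * var_Z)
         + k A * var_X^3 + k B * var_X^2 * var_Z + k C * var_X * var_Z^2 + k D * var_Z^3)"

end

theory Submission
  imports Defs "Subresultants.More_Homomorphisms" "HOL-Number_Theory.Residues"
begin

(* Write w = eps^2 in the algebraic closure. If b1 d2 - b2 d1 <> 0, an invertible linear change of
   coordinates diagonalises the part of the equation that is quadratic in t1, t2:
   the surface becomes m (X Z^2 - t1 t2^2) + K(X, t1) with m = 4 w (b1 d2 - b2 d1) and K a binary
   cubic. Viewed as a polynomial in Z over k[t1, t2, X] this is r + m X Z^2, and the term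
   -m t1 t2^2 keeps r from vanishing at X = 0, so an Eisenstein-type argument at the prime X gives
   irreducibility. If b1 d2 - b2 d1 = 0, then (d1, d2) = l (b1, b2), the cubic AX^3 + ... + DZ^3
   vanishes at (X : Z) = (-l : 1), and the plane X + l Z = 0 splits off. *)

lemma comm_ring_hom_comp:
  assumes "comm_ring_hom f" and "comm_ring_hom g"
  shows "comm_ring_hom (f \<circ> g)"
proof -
  interpret f: comm_ring_hom f by fact
  interpret g: comm_ring_hom g by fact
  show ?thesis by unfold_locales (simp_all add: hom_distribs)
qed

lemma comm_ring_hom_eval_poly:
  assumes "comm_ring_hom h"
  shows "comm_ring_hom (\<lambda>p. eval_poly h p x)"
proof -
  interpret map_poly_comm_ring_hom h
    using assms by (simp add: map_poly_comm_ring_hom_def)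
  show ?thesis unfolding eval_poly_def by unfold_locales (simp_all add: hom_distribs)
qed

lemma comm_ring_hom_poly_eqI:
  fixes f g :: "'a::comm_ring_1 poly \<Rightarrow> 'b::comm_ring_1"
  assumes "comm_ring_hom f" and "comm_ring_hom g"
    and const: "\<And>a. f [:a:] = g [:a:]" and var: "f [:0, 1:] = g [:0, 1:]"
  shows "f p = g p"
proof -
  interpret f: comm_ring_hom f by fact
  interpret g: comm_ring_hom g by fact
  show ?thesis
  proof (induction p)
    case (pCons a p)
    have "pCons a p = [:a:] + [:0, 1:] * p" by simp
    then show ?case
      using pCons.IH const var by (simp only: f.hom_add f.hom_mult g.hom_add g.hom_mult)
  qed simp
qed

lemma irreducible_if_hom_image_irreducible:
  fixes \<phi> :: "'a::comm_ring_1 \<Rightarrow> 'b::comm_ring_1" and \<psi> :: "'b \<Rightarrow> 'a"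
  assumes "comm_ring_hom \<phi>" and "comm_ring_hom \<psi>" and inverse: "\<And>p. \<psi> (\<phi> p) = p"
    and irr: "irreducible (\<phi> F)"
  shows "irreducible F"
proof (rule irreducibleI)
  interpret \<phi>: comm_ring_hom \<phi> by fact
  interpret \<psi>: comm_ring_hom \<psi> by fact
  show "F \<noteq> 0" using irr by auto
  show "\<not> F dvd 1" using irr \<phi>.hom_dvd_1 irreducible_not_unit by blast
  fix a b assume "F = a * b"
  then have "\<phi> a dvd 1 \<or> \<phi> b dvd 1" using irr irreducibleD \<phi>.hom_mult by metis
  then show "a dvd 1 \<or> b dvd 1" using \<psi>.hom_dvd_1 inverse by metis
qed

lemma not_unit_if_hom_eq_0:
  fixes h :: "'a::comm_ring_1 \<Rightarrow> 'b::idom"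
  assumes "comm_ring_hom h" and "h p = 0"
  shows "\<not> p dvd 1"
proof -
  interpret comm_ring_hom h by fact
  show ?thesis using hom_dvd_1[of p] assms(2) by auto
qed

lemma is_unit_if_mult_eq_unit_times_x:
  fixes h k :: "'a::idom poly"
  assumes hk: "h * k = [:0, c:]" and c: "c dvd 1" and h0: "poly h 0 \<noteq> 0"
  shows "h dvd 1"
proof -
  have "poly h 0 * poly k 0 = 0" using arg_cong[OF hk, of "\<lambda>p. poly p 0"] by simp
  then have "[:0, 1:] dvd k" using h0 dvd_iff_poly_eq_0[of 0 k] by simp
  then obtain k' where k: "k = [:0, 1:] * k'" ..
  have "[:0, 1:] * (h * k') = [:0, 1:] * [:c:]" using hk k by (simp add: algebra_simps)
  then have "h dvd [:c:]" by (metis dvd_triv_left mult_cancel_left pCons_eq_0_iff zero_neq_one)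
  then show ?thesis using c is_unit_const_poly_iff dvd_trans by blast
qed

lemma factor_mod_x_constant:
  fixes H K :: "'a::idom poly poly"
  assumes HK: "map_poly (\<lambda>p. poly p 0) (H * K) = [:a:]" and "a \<noteq> 0"
  shows "poly (coeff H 0) 0 \<noteq> 0" and "\<And>i. i > 0 \<Longrightarrow> poly (coeff H i) 0 = 0"
proof -
  interpret reduce: map_poly_comm_ring_hom "\<lambda>p::'a poly. poly p 0" ..
  define R where "R = map_poly (\<lambda>p::'a poly. poly p 0)"
  have coeff_R: "coeff (R P) i = poly (coeff P i) 0" for P i
    unfolding R_def by (simp add: coeff_map_poly)
  have R_prod: "R H * R K = [:a:]" using HK unfolding R_def reduce.hom_mult .
  then have "R H \<noteq> 0" "R K \<noteq> 0" using \<open>a \<noteq> 0\<close> by auto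
  then have deg: "degree (R H) = 0" using R_prod degree_mult_eq by fastforce
  then have "[:coeff (R H) 0:] \<noteq> 0" using \<open>R H \<noteq> 0\<close> degree_0_id by metis
  then show "poly (coeff H 0) 0 \<noteq> 0" using coeff_R by simp
  show "poly (coeff H i) 0 = 0" if "i > 0" for i
    using coeff_R[of H i] coeff_eq_0[of "R H" i] deg that by simp
qed

(* Eisenstein at the prime X of 'a[X]: modulo X both factors are constants in Z, so X divides
   their Z-coefficients of positive degree, while the leading coefficients multiply to c X. *)
lemma irreducible_add_unit_x_mult_square:
  fixes r :: "'a::idom poly"
  assumes c: "c dvd 1" and r: "poly r 0 \<noteq> 0"
  shows "irreducible [: r, 0, [:0, c:] :]" (is "irreducible ?G")
proof (rule irreducibleI)
  have "c \<noteq> 0" using c by auto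
  then have deg: "degree ?G = 2" by (simp add: numeral_2_eq_2)
  then show "?G \<noteq> 0" by auto
  show "\<not> ?G dvd 1" using deg by (auto simp: is_unit_poly_iff)
  fix H1 H2 assume G: "?G = H1 * H2"
  have "map_poly (\<lambda>p. poly p 0) (H1 * H2) = [:poly r 0:]"
    unfolding G[symmetric] using \<open>c \<noteq> 0\<close> by simp
  note mod_x = factor_mod_x_constant[OF this r]
    factor_mod_x_constant[OF this[unfolded mult.commute[of H1 H2]] r]
  have "lead_coeff ?G = [:0, c:]" using deg by (simp add: numeral_2_eq_2)
  then have lc: "lead_coeff H1 * lead_coeff H2 = [:0, c:]" unfolding G lead_coeff_mult .
  have deg_sum: "degree H1 + degree H2 = 2"
    using G deg by (metis degree_mult_eq mult_eq_0_iff \<open>?G \<noteq> 0\<close>)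
  have unit1: "H1 dvd 1" if "degree H1 = 0"
    using is_unit_if_mult_eq_unit_times_x[OF lc c] mod_x(1) that
    by (metis degree_0_id is_unit_const_poly_iff)
  have unit2: "H2 dvd 1" if "degree H2 = 0"
    using is_unit_if_mult_eq_unit_times_x[of "lead_coeff H2" "lead_coeff H1"] lc c mod_x(3) that
    by (metis mult.commute degree_0_id is_unit_const_poly_iff)
  have "\<not> (degree H1 = 1 \<and> degree H2 = 1)"
  proof
    assume "degree H1 = 1 \<and> degree H2 = 1"
    then have "[:0, 1:] dvd lead_coeff H1" "[:0, 1:] dvd lead_coeff H2"
      using mod_x(2,4)[of 1] dvd_iff_poly_eq_0[of 0] by auto
    then have "[:0, 1:] * [:0, 1:] dvd [:0, c:]" using lc mult_dvd_mono by metis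
    then show False using \<open>c \<noteq> 0\<close> by (auto elim!: dvdE)
  qed
  then show "H1 dvd 1 \<or> H2 dvd 1" using deg_sum unit1 unit2 by linarith
qed

interpretation mconst_hom: comm_ring_hom "mconst :: 'k::comm_ring_1 \<Rightarrow> 'k mpoly4"
  by unfold_locales (simp_all add: mconst_def pCons_one)

definition mpoly4_subst ::
  "'k::comm_ring_1 mpoly4 \<Rightarrow> 'k mpoly4 \<Rightarrow> 'k mpoly4 \<Rightarrow> 'k mpoly4 \<Rightarrow> 'k mpoly4 \<Rightarrow> 'k mpoly4" where
  "mpoly4_subst T1 T2 T3 T4 p =
     eval_poly (\<lambda>p3. eval_poly (\<lambda>p2. eval_poly (\<lambda>p1. eval_poly mconst p1 T1) p2 T2) p3 T3) p T4"

interpretation mpoly4_subst_hom: comm_ring_hom "mpoly4_subst T1 T2 T3 T4" for T1 T2 T3 T4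
  unfolding mpoly4_subst_def[abs_def]
  by (intro comm_ring_hom_eval_poly mconst_hom.comm_ring_hom_axioms)

lemma mpoly4_subst_simps [simp]:
  "mpoly4_subst T1 T2 T3 T4 (mconst c) = mconst c"
  "mpoly4_subst T1 T2 T3 T4 var_t1 = T1"
  "mpoly4_subst T1 T2 T3 T4 var_t2 = T2"
  "mpoly4_subst T1 T2 T3 T4 var_X = T3"
  "mpoly4_subst T1 T2 T3 T4 var_Z = T4"
  by (simp_all add: mpoly4_subst_def eval_poly_def mconst_def var_t1_def var_t2_def var_X_def var_Z_def
      map_poly_simps pCons_one)

lemma mpoly4_hom_eq_id:
  fixes f :: "'k::comm_ring_1 mpoly4 \<Rightarrow> 'k mpoly4"
  assumes f: "comm_ring_hom f" and const: "\<And>a. f (mconst a) = mconst a"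
    and "f var_t1 = var_t1" "f var_t2 = var_t2" "f var_X = var_X" "f var_Z = var_Z"
  shows "f p = p"
proof -
  have fixes_image: "f (e p) = e p"
    if e: "comm_ring_hom e" and "\<And>a. f (e [:a:]) = e [:a:]" and "f (e [:0, 1:]) = e [:0, 1:]" for e p
    using comm_ring_hom_poly_eqI[OF comm_ring_hom_comp[OF f e] e] that by simp
  have lift: "comm_ring_hom (\<lambda>p::'a::comm_ring_1. [:p:])"
    by (rule coeff_lift_hom.comm_ring_hom_axioms)
  have lift2: "comm_ring_hom (\<lambda>p::'a::comm_ring_1. [:[:p:]:])"
    using comm_ring_hom_comp[OF lift lift] by (simp add: comp_def)
  have lift3: "comm_ring_hom (\<lambda>p::'a::comm_ring_1. [:[:[:p:]:]:])"
    using comm_ring_hom_comp[OF lift lift2] by (simp add: comp_def)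
  have fixes_t1: "f [:[:[:p:]:]:] = [:[:[:p:]:]:]" for p :: "'k poly"
    using fixes_image[OF lift3] const assms(3) by (simp add: mconst_def var_t1_def)
  have fixes_t1_t2: "f [:[:p:]:] = [:[:p:]:]" for p :: "'k poly poly"
    using fixes_image[OF lift2] fixes_t1 assms(4) by (simp add: var_t2_def)
  have fixes_t1_t2_X: "f [:p:] = [:p:]" for p :: "'k poly poly poly"
    using fixes_image[OF lift] fixes_t1_t2 assms(5) by (simp add: var_X_def)
  have identity: "comm_ring_hom (\<lambda>p::'k mpoly4. p)" by unfold_locales simp_all
  show ?thesis
    using fixes_image[OF identity] fixes_t1_t2_X assms(6) by (simp add: var_Z_def)
qed

definition binary_cubic :: "'a::comm_ring_1 \<Rightarrow> 'a \<Rightarrow> 'a \<Rightarrow> 'a \<Rightarrow> 'a \<Rightarrow> 'a \<Rightarrow> 'a" where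
  "binary_cubic A B C D x z = A * x^3 + B * x^2 * z + C * x * z^2 + D * z^3"

lemma (in comm_ring_hom) hom_binary_cubic [hom_distribs]:
  "hom (binary_cubic A B C D x z) = binary_cubic (hom A) (hom B) (hom C) (hom D) (hom x) (hom z)"
  by (simp add: binary_cubic_def hom_distribs)

lemma irreducible_surface_normal_form:
  fixes m :: "'k::field"
  assumes "m \<noteq> 0"
  shows "irreducible (mconst m * (var_X * var_Z^2 - var_t1 * var_t2^2)
    + binary_cubic (mconst A) (mconst B) (mconst C) (mconst D)
        (mconst a * var_X - mconst a' * var_t1) (mconst b * var_t1 - mconst b' * var_X))"
    (is "irreducible ?F")
proof -
  define \<kappa> :: "'k \<Rightarrow> 'k poly poly poly" where "\<kappa> a = [:[:[:a:]:]:]" for a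
  define x :: "'k poly poly poly" where "x = [:0, 1:]"
  define t1 :: "'k poly poly poly" where "t1 = [:[:[:0, 1:]:]:]"
  define t2 :: "'k poly poly poly" where "t2 = [:[:0, 1:]:]"
  define r where "r = binary_cubic (\<kappa> A) (\<kappa> B) (\<kappa> C) (\<kappa> D)
    (\<kappa> a * x - \<kappa> a' * t1) (\<kappa> b * t1 - \<kappa> b' * x) - \<kappa> m * t1 * t2^2"
  have lifts: "mconst c = [:\<kappa> c:]" "var_X = [:x:]" "var_t1 = [:t1:]" "var_t2 = [:t2:]" for c
    by (simp_all add: \<kappa>_def x_def t1_def t2_def mconst_def var_X_def var_t1_def var_t2_def)
  have cubic: "binary_cubic (mconst A) (mconst B) (mconst C) (mconst D)
        (mconst a * var_X - mconst a' * var_t1) (mconst b * var_t1 - mconst b' * var_X)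
      = [: binary_cubic (\<kappa> A) (\<kappa> B) (\<kappa> C) (\<kappa> D)
             (\<kappa> a * x - \<kappa> a' * t1) (\<kappa> b * t1 - \<kappa> b' * x) :]"
    unfolding lifts
    by (simp only: coeff_lift_hom.hom_binary_cubic coeff_lift_hom.hom_mult coeff_lift_hom.hom_minus)
  have quadratic: "mconst m * (var_X * var_Z^2 - var_t1 * var_t2^2)
      = [: - (\<kappa> m * t1 * t2^2), 0, [:0, [:[:m:]:]:] :]"
    unfolding lifts by (simp add: \<kappa>_def x_def var_Z_def power2_eq_square mult_ac)
  have "?F = [: r, 0, [:0, [:[:m:]:]:] :]"
    unfolding cubic quadratic r_def by simp
  moreover have "poly r 0 \<noteq> 0"
  proof
    have "poly (poly (poly r 0) [:\<tau>:]) 1 = binary_cubic A B C D (- a') b - m * \<tau>^2" for \<tau>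
      unfolding r_def \<kappa>_def x_def t1_def t2_def by (simp add: binary_cubic_def)
    moreover assume "poly r 0 = 0"
    ultimately have "binary_cubic A B C D (- a') b = m * \<tau>^2" for \<tau> by simp
    from this[of 0] this[of 1] show False using \<open>m \<noteq> 0\<close> by simp
  qed
  moreover have "[:[:m:]:] dvd 1" using \<open>m \<noteq> 0\<close> by (simp add: is_unit_const_poly_iff)
  ultimately show ?thesis using irreducible_add_unit_x_mult_square by metis
qed

definition surface_form :: "'k::comm_ring_1 \<Rightarrow> 'k \<Rightarrow> 'k \<Rightarrow> 'k \<Rightarrow> 'k \<Rightarrow> 'k \<Rightarrow> 'k \<Rightarrow> 'k \<Rightarrow> 'k \<Rightarrow> 'k mpoly4" where
  "surface_form W B1 B2 D1 D2 A B C D =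
     2 * var_t1 * var_t2 * (mconst B1 * var_X + mconst D1 * var_Z)
     - (var_t1^2 + mconst W * var_t2^2) * (mconst B2 * var_X + mconst D2 * var_Z)
     + binary_cubic (mconst A) (mconst B) (mconst C) (mconst D) var_X var_Z"

(* Sends t1 + eps t2, t1 - eps t2 to 2 eps Z, 2 eps t2, and the linear forms
   (B1 -/+ eps B2) X + (D1 -/+ eps D2) Z to Delta X, Delta t1 with Delta = 2 eps (B1 D2 - B2 D1). *)
definition surface_subst :: "'k::comm_ring_1 \<Rightarrow> 'k \<Rightarrow> 'k \<Rightarrow> 'k \<Rightarrow> 'k \<Rightarrow> 'k mpoly4 \<Rightarrow> 'k mpoly4" where
  "surface_subst eps B1 B2 D1 D2 = mpoly4_subst (mconst eps * (var_Z + var_t2)) (var_Z - var_t2)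
     (mconst (D1 + eps * D2) * var_X - mconst (D1 - eps * D2) * var_t1)
     (mconst (B1 - eps * B2) * var_t1 - mconst (B1 + eps * B2) * var_X)"

lemma surface_subst_surface_form:
  fixes eps W B1 B2 D1 D2 A B C D :: "'k::comm_ring_1"
  assumes "eps^2 = W"
  shows "surface_subst eps B1 B2 D1 D2 (surface_form W B1 B2 D1 D2 A B C D)
    = mconst (4 * W * (B1 * D2 - B2 * D1)) * (var_X * var_Z^2 - var_t1 * var_t2^2)
      + binary_cubic (mconst A) (mconst B) (mconst C) (mconst D)
          (mconst (D1 + eps * D2) * var_X - mconst (D1 - eps * D2) * var_t1)
          (mconst (B1 - eps * B2) * var_t1 - mconst (B1 + eps * B2) * var_X)"
  unfolding surface_subst_def surface_form_def assms[symmetric]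
  by (simp add: hom_distribs) (simp add: algebra_simps power2_eq_square)

lemma surface_subst_left_inverse:
  fixes eps B1 B2 D1 D2 :: "'k::field"
  assumes two: "(2::'k) \<noteq> 0" and eps: "eps \<noteq> 0" and det: "B1 * D2 \<noteq> B2 * D1"
  obtains \<psi> where "comm_ring_hom \<psi>" and "\<And>p. \<psi> (surface_subst eps B1 B2 D1 D2 p) = p"
proof -
  define \<phi> where "\<phi> = surface_subst eps B1 B2 D1 D2"
  define \<Delta> where "\<Delta> = (B1 - eps * B2) * (D1 + eps * D2) - (D1 - eps * D2) * (B1 + eps * B2)"
  have "\<Delta> = 2 * eps * (B1 * D2 - B2 * D1)" unfolding \<Delta>_def by (simp add: algebra_simps)
  then have "\<Delta> \<noteq> 0" using two eps det by simp
  have inv: "mconst (1 / a) * mconst a = (1::'k mpoly4)" if "a \<noteq> 0" for a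
    using that by (simp flip: mconst_hom.hom_mult)
  define \<psi> where "\<psi> = mpoly4_subst
    (mconst (1 / \<Delta>) * (mconst (B1 + eps * B2) * var_X + mconst (D1 + eps * D2) * var_Z))
    (mconst (1 / 2) * (mconst (1 / eps) * var_t1 - var_t2))
    (mconst (1 / \<Delta>) * (mconst (B1 - eps * B2) * var_X + mconst (D1 - eps * D2) * var_Z))
    (mconst (1 / 2) * (mconst (1 / eps) * var_t1 + var_t2))"
  have "\<psi> (\<phi> p) = p" for p
  proof (rule mpoly4_hom_eq_id[where f = "\<psi> \<circ> \<phi>", simplified])
    show "comm_ring_hom (\<psi> \<circ> \<phi>)"
      unfolding \<psi>_def \<phi>_def surface_subst_def
      by (intro comm_ring_hom_comp mpoly4_subst_hom.comm_ring_hom_axioms)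
    show "\<psi> (\<phi> (mconst a)) = mconst a" for a
      by (simp add: \<psi>_def \<phi>_def surface_subst_def)
    have "\<psi> (\<phi> var_t1) = (mconst (1 / 2) * mconst 2) * (mconst (1 / eps) * mconst eps) * var_t1"
      by (simp add: \<psi>_def \<phi>_def surface_subst_def hom_distribs algebra_simps)
    then show "\<psi> (\<phi> var_t1) = var_t1" using inv two eps by simp
    have "\<psi> (\<phi> var_t2) = (mconst (1 / 2) * mconst 2) * var_t2"
      by (simp add: \<psi>_def \<phi>_def surface_subst_def hom_distribs algebra_simps)
    then show "\<psi> (\<phi> var_t2) = var_t2" using inv two by simp
    have "\<psi> (\<phi> var_X) = (mconst (1 / \<Delta>) * mconst \<Delta>) * var_X"
      by (simp add: \<psi>_def \<phi>_def surface_subst_def \<Delta>_def hom_distribs algebra_simps)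
    then show "\<psi> (\<phi> var_X) = var_X" using inv \<open>\<Delta> \<noteq> 0\<close> by simp
    have "\<psi> (\<phi> var_Z) = (mconst (1 / \<Delta>) * mconst \<Delta>) * var_Z"
      by (simp add: \<psi>_def \<phi>_def surface_subst_def \<Delta>_def hom_distribs algebra_simps)
    then show "\<psi> (\<phi> var_Z) = var_Z" using inv \<open>\<Delta> \<noteq> 0\<close> by simp
  qed
  then show thesis
    using that[of \<psi>] unfolding \<psi>_def \<phi>_def by (simp add: mpoly4_subst_hom.comm_ring_hom_axioms)
qed

lemma surface_form_irreducible:
  fixes eps W B1 B2 D1 D2 A B C D :: "'k::field"
  assumes "eps^2 = W" and "(2::'k) \<noteq> 0" and "eps \<noteq> 0" and "B1 * D2 \<noteq> B2 * D1"
  shows "irreducible (surface_form W B1 B2 D1 D2 A B C D)"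
proof -
  obtain \<psi> where "comm_ring_hom \<psi>" and inverse: "\<And>p. \<psi> (surface_subst eps B1 B2 D1 D2 p) = p"
    using surface_subst_left_inverse[OF assms(2-4)] by blast
  have "(4::'k) = 2 * 2" by simp
  then have "(4::'k) \<noteq> 0" using assms(2) by (metis mult_eq_0_iff)
  then have "4 * W * (B1 * D2 - B2 * D1) \<noteq> 0"
    using assms by (simp flip: assms(1))
  then have "irreducible (surface_subst eps B1 B2 D1 D2 (surface_form W B1 B2 D1 D2 A B C D))"
    unfolding surface_subst_surface_form[OF assms(1)] by (rule irreducible_surface_normal_form)
  then show ?thesis
    using irreducible_if_hom_image_irreducible \<open>comm_ring_hom \<psi>\<close> inverse
      mpoly4_subst_hom.comm_ring_hom_axioms unfolding surface_subst_def by blast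
qed

lemma surface_form_not_irreducible:
  fixes l W B1 B2 A B C D :: "'k::idom"
  assumes "binary_cubic A B C D (- l) 1 = 0"
  shows "\<not> irreducible (surface_form W B1 B2 (l * B1) (l * B2) A B C D)"
proof
  define L where "L = var_X + mconst l * var_Z"
  define Q where "Q = 2 * var_t1 * var_t2 * mconst B1 - (var_t1^2 + mconst W * var_t2^2) * mconst B2
    + mconst A * var_X^2 + mconst (B - l * A) * var_X * var_Z + mconst (C - l * B + l^2 * A) * var_Z^2"
  have "D = A * l^3 - B * l^2 + C * l"
    using assms by (simp add: binary_cubic_def algebra_simps)
  then have factor: "surface_form W B1 B2 (l * B1) (l * B2) A B C D = L * Q"
    unfolding surface_form_def binary_cubic_def L_def Q_def
    by (simp add: hom_distribs) (simp add: algebra_simps power2_eq_square power3_eq_cube)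
  have "mpoly4_subst 0 0 0 0 L = 0" "mpoly4_subst 0 0 0 0 Q = 0"
    by (simp_all add: L_def Q_def hom_distribs)
  then have "\<not> L dvd 1" "\<not> Q dvd 1"
    using not_unit_if_hom_eq_0[OF mpoly4_subst_hom.comm_ring_hom_axioms] by blast+
  moreover assume "irreducible (surface_form W B1 B2 (l * B1) (l * B2) A B C D)"
  ultimately show False using irreducibleD factor by blast
qed

lemma surface_poly_eq_surface_form:
  "surface_poly h w a1 a2 b1 b2 c1 c2 d1 d2 e1 e2 =
    surface_form (h w) (h b1) (h b2) (h d1) (h d2)
      (h (- a2*b1 + a1*b2)) (h (b2*c1 - b1*c2 - a2*d1 + a1*d2))
      (h (- c2*d1 + c1*d2 + b2*e1 - b1*e2)) (h (d2*e1 - d1*e2))"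
  unfolding surface_poly_def surface_form_def binary_cubic_def Let_def by (simp only: add.assoc)

lemma surface_poly_not_irreducible:
  fixes h :: "'a::field \<Rightarrow> 'k::field"
  assumes "comm_ring_hom h" and d: "d1 = l * b1" "d2 = l * b2"
  shows "\<not> irreducible (surface_poly h w a1 a2 b1 b2 c1 c2 d1 d2 e1 e2)"
proof -
  interpret comm_ring_hom h by fact
  have "binary_cubic (- a2*b1 + a1*b2) (b2*c1 - b1*c2 - a2*(l*b1) + a1*(l*b2))
      (- c2*(l*b1) + c1*(l*b2) + b2*e1 - b1*e2) ((l*b2)*e1 - (l*b1)*e2) (- l) 1 = 0"
    (is "binary_cubic ?A ?B ?C ?D _ _ = 0")
    by (simp add: binary_cubic_def algebra_simps power2_eq_square power3_eq_cube)
  then have "binary_cubic (h ?A) (h ?B) (h ?C) (h ?D) (- h l) 1 = 0"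
    using hom_binary_cubic[of ?A ?B ?C ?D "- l" 1] by (simp add: hom_uminus)
  then have "\<not> irreducible (surface_form (h w) (h b1) (h b2) (h l * h b1) (h l * h b2)
      (h ?A) (h ?B) (h ?C) (h ?D))"
    by (rule surface_form_not_irreducible)
  then show ?thesis unfolding d surface_poly_eq_surface_form hom_mult .
qed

lemma proportional_if_cross_product_eq:
  fixes b1 b2 d1 d2 :: "'k::field"
  assumes "b1 * d2 = b2 * d1" and "b1 \<noteq> 0 \<or> b2 \<noteq> 0"
  obtains l where "d1 = l * b1" and "d2 = l * b2"
proof (cases "b1 = 0")
  case True
  then show thesis using assms that[of "d2 / b2"] by simp
next
  case False
  then show thesis using assms that[of "d1 / b1"] by (simp add: field_simps)
qed

lemma two_neq_zero_if_odd_card: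
  assumes "odd (card (UNIV :: 'a::{finite, ring_1} set))"
  shows "(2::'a) \<noteq> 0"
proof
  assume "(2::'a) = 0"
  then have "CHAR('a) dvd 2" using of_nat_eq_0_iff_char_dvd[where 'a = 'a, of 2] by simp
  then have "CHAR('a) = 2"
    using CHAR_not_1 by (metis One_nat_def dvd_antisym nat_dvd_1_iff_1 two_is_prime_nat prime_nat_iff)
  then show False using CHAR_dvd_CARD[where 'a = 'a] assms by simp
qed

interpretation to_ac_hom: comm_ring_hom "to_ac :: 'a::field \<Rightarrow> 'a alg_closure"
  by unfold_locales simp_all

theorem mainTheorem5:
  fixes w :: "'a::{finite,field}"
    and eps :: "'a alg_closure"
    and a1 a2 b1 b2 c1 c2 d1 d2 e1 e2 :: 'a
  assumes "odd (card (UNIV :: 'a set))"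
    and "\<not> (\<exists>y::'a. y^2 = w)"
    and "eps^2 = to_ac w"
    and "conic_nonsingular (to_ac a1 + eps * to_ac a2) (to_ac b1 + eps * to_ac b2)
           (to_ac c1 + eps * to_ac c2) (to_ac d1 + eps * to_ac d2) (to_ac e1 + eps * to_ac e2)"
    and "to_ac b1 + eps * to_ac b2 \<noteq> 0"
  shows "irreducible (surface_poly to_ac w a1 a2 b1 b2 c1 c2 d1 d2 e1 e2)
           \<longleftrightarrow> b1*d2 - b2*d1 \<noteq> 0"
proof
  assume irreducible: "irreducible (surface_poly to_ac w a1 a2 b1 b2 c1 c2 d1 d2 e1 e2)"
  show "b1*d2 - b2*d1 \<noteq> 0"
  proof
    assume "b1*d2 - b2*d1 = 0"
    then have "b1 * d2 = b2 * d1" by simp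
    moreover have "b1 \<noteq> 0 \<or> b2 \<noteq> 0" using assms(5) by auto
    ultimately obtain l where "d1 = l * b1" "d2 = l * b2" by (rule proportional_if_cross_product_eq)
    then show False
      using surface_poly_not_irreducible[OF to_ac_hom.comm_ring_hom_axioms] irreducible by blast
  qed
next
  assume "b1*d2 - b2*d1 \<noteq> 0"
  then have "to_ac b1 * to_ac d2 \<noteq> to_ac b2 * to_ac d1" by (simp flip: to_ac_mult)
  moreover have "(2::'a alg_closure) \<noteq> 0"
    using two_neq_zero_if_odd_card[OF assms(1)] by (metis to_ac_eq_0_iff to_ac_numeral)
  moreover have "eps \<noteq> 0" using assms(2,3) by auto
  ultimately show "irreducible (surface_poly to_ac w a1 a2 b1 b2 c1 c2 d1 d2 e1 e2)"
    unfolding surface_poly_eq_surface_form by (intro surface_form_irreducible[OF assms(3)])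
qed

end
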